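(* Let $n\ge 1$ be an integer, $\kappa\in\mathbb{R}$, $T>0$ and $0<|\phi|<1/2$ satisfy $$\coth\big((\tfrac12-\phi)T\big)=\kappa-\coth\big((\tfrac12+\phi)T\big),$$ and set $\tau=nT$. Define $$\gamma_1=\frac{\coth^2(\tau-(n-\tfrac12+\phi)T)-1}{[\kappa-\coth(\tau-(n-\tfrac12+\phi)T)]^2-1},\qquad \gamma_2=\frac{\coth^2(\tau-(n-\tfrac12-\phi)T)-1}{[\kappa-\coth(\tau-(n-\tfrac12-\phi)T)]^2-1}.$$ Then $\gamma_1\gamma_2=1$, $\beta:=\gamma_1+\gamma_2>2$, and $\widehat D_a(\lambda)=\lambda^{2n-1}(\lambda-\gamma_1)(\lambda-\gamma_2)-(1-\gamma_1)(1-\gamma_2)$ factors as $(\lambda-1)\widehat H_a(\lambda)$ with $$\widehat H_a(\lambda)=\lambda^{2n}+(1-\beta)\lambda^{2n-1}+(2-\beta)\sum_{i=0}^{2n-2}\lambda^i;$$ in particular $\widehat D_a$ has a real root strictly greater than $1$. *)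

theory Defs
  imports Complex_Main
begin

definition coth :: "real \<Rightarrow> real" where
  "coth x = cosh x / sinh x"

end

theory Submission
  imports Defs
begin

text \<open>
  Put \<open>a = (1/2 - \<phi>) T\<close> and \<open>b = (1/2 + \<phi>) T\<close>. The arguments of \<open>coth\<close> in \<open>\<gamma>\<^sub>1, \<gamma>\<^sub>2\<close>
  collapse to \<open>a\<close> and \<open>b\<close>, and the hypothesis says \<open>\<kappa> = coth a + coth b\<close>. Since
  \<open>coth\<^sup>2 x - 1 = 1 / sinh\<^sup>2 x\<close>, this gives \<open>\<gamma>\<^sub>1 = (sinh b / sinh a)\<^sup>2 = 1 / \<gamma>\<^sub>2\<close>, and
  \<open>\<gamma>\<^sub>1 \<noteq> 1\<close> because \<open>\<phi> \<noteq> 0\<close>; hence \<open>\<beta> = \<gamma>\<^sub>1 + 1/\<gamma>\<^sub>1 > 2\<close>. The factorisation is a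
  geometric-sum identity valid whenever \<open>\<gamma>\<^sub>1 \<gamma>\<^sub>2 = 1\<close>. Finally the cofactor \<open>\<widehat>H\<close> is
  \<open>2n(2 - \<beta>) < 0\<close> at \<open>1\<close>, while at \<open>max \<gamma>\<^sub>1 \<gamma>\<^sub>2 > 1\<close> the polynomial \<open>\<widehat>D\<close> equals
  \<open>\<beta> - 2 > 0\<close>, so \<open>\<widehat>H\<close> is positive there and has a root in between.
\<close>

lemma coth_square_minus_one:
  assumes "sinh x \<noteq> 0"
  shows "coth x ^ 2 - 1 = 1 / sinh x ^ 2"
  using assms by (simp add: coth_def power_divide cosh_square_eq field_simps)

lemma add_inverse_gt_two:
  fixes r :: real
  assumes "r > 0" "r \<noteq> 1"
  shows "r + 1 / r > 2"
proof -
  have "(r - 1)\<^sup>2 > 0"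
    using assms(2) by simp
  then have "r * r + 1 > 2 * r"
    by (simp add: power2_eq_square algebra_simps)
  then show ?thesis
    using assms(1) by (simp add: field_simps)
qed

text \<open>
  The paper's \<open>\<widehat>D\<^sub>a\<close> and \<open>\<widehat>H\<^sub>a\<close>, with the exponent \<open>2n - 1\<close> written as \<open>m\<close>.
\<close>

definition Dhat :: "nat \<Rightarrow> real \<Rightarrow> real \<Rightarrow> real \<Rightarrow> real" where
  "Dhat m \<gamma>\<^sub>1 \<gamma>\<^sub>2 x = x ^ m * (x - \<gamma>\<^sub>1) * (x - \<gamma>\<^sub>2) - (1 - \<gamma>\<^sub>1) * (1 - \<gamma>\<^sub>2)"

definition Hhat :: "nat \<Rightarrow> real \<Rightarrow> real \<Rightarrow> real" where
  "Hhat m \<beta> x = x ^ Suc m + (1 - \<beta>) * x ^ m + (2 - \<beta>) * (\<Sum>i<m. x ^ i)"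

lemma Dhat_eq_mult_Hhat:
  assumes "\<gamma>\<^sub>1 * \<gamma>\<^sub>2 = 1"
  shows "Dhat m \<gamma>\<^sub>1 \<gamma>\<^sub>2 x = (x - 1) * Hhat m (\<gamma>\<^sub>1 + \<gamma>\<^sub>2) x"
proof -
  have geometric: "(x - 1) * (\<Sum>i<m. x ^ i) = x ^ m - 1"
    by (simp add: power_diff_1_eq)
  have "(x - 1) * Hhat m (\<gamma>\<^sub>1 + \<gamma>\<^sub>2) x
      = (x - 1) * (x * x ^ m + (1 - (\<gamma>\<^sub>1 + \<gamma>\<^sub>2)) * x ^ m)
        + (2 - (\<gamma>\<^sub>1 + \<gamma>\<^sub>2)) * ((x - 1) * (\<Sum>i<m. x ^ i))"
    by (simp add: Hhat_def algebra_simps)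
  also have "\<dots> = Dhat m \<gamma>\<^sub>1 \<gamma>\<^sub>2 x"
  proof -
    have "(x - 1) * (x * y + (1 - (\<gamma>\<^sub>1 + \<gamma>\<^sub>2)) * y) + (2 - (\<gamma>\<^sub>1 + \<gamma>\<^sub>2)) * (y - 1)
        = y * (x - \<gamma>\<^sub>1) * (x - \<gamma>\<^sub>2) - (1 - \<gamma>\<^sub>1) * (1 - \<gamma>\<^sub>2)" for y
      using assms by algebra
    then show ?thesis
      unfolding geometric Dhat_def .
  qed
  finally show ?thesis ..
qed

lemma Hhat_at_one: "Hhat m \<beta> 1 = (2 - \<beta>) * real (Suc m)"
  by (simp add: Hhat_def algebra_simps)

lemma Dhat_has_root_gt_one:
  assumes "\<gamma>\<^sub>1 * \<gamma>\<^sub>2 = 1" "\<gamma>\<^sub>1 + \<gamma>\<^sub>2 > 2"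
  shows "\<exists>x > 1. Dhat m \<gamma>\<^sub>1 \<gamma>\<^sub>2 x = 0"
proof -
  let ?H = "Hhat m (\<gamma>\<^sub>1 + \<gamma>\<^sub>2)"
  obtain g where g: "g \<in> {\<gamma>\<^sub>1, \<gamma>\<^sub>2}" "g > 1"
    using assms by (metis insertCI linorder_not_le add_mono one_add_one)
  have "Dhat m \<gamma>\<^sub>1 \<gamma>\<^sub>2 g = \<gamma>\<^sub>1 + \<gamma>\<^sub>2 - 2"
    using g(1) assms(1) by (auto simp: Dhat_def algebra_simps)
  then have "(g - 1) * ?H g > 0"
    using Dhat_eq_mult_Hhat[OF assms(1)] assms(2) by simp
  then have "?H g > 0"
    using g(2) by (simp add: zero_less_mult_iff)
  moreover have "?H 1 < 0"
    using assms(2) by (simp add: Hhat_at_one mult_neg_pos)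
  moreover have "\<forall>x. 1 \<le> x \<and> x \<le> g \<longrightarrow> isCont ?H x"
    unfolding Hhat_def by (auto intro!: continuous_intros)
  ultimately obtain x where "1 \<le> x" "x \<le> g" "?H x = 0"
    using IVT[of ?H 1 0 g] g(2) by auto
  moreover from \<open>?H 1 < 0\<close> \<open>?H x = 0\<close> have "x \<noteq> 1"
    by auto
  ultimately show ?thesis
    using Dhat_eq_mult_Hhat[OF assms(1)] by force
qed

theorem mainTheorem12:
  fixes n :: nat and \<kappa> T \<phi> \<tau> \<gamma>\<^sub>1 \<gamma>\<^sub>2 \<beta> :: real
  assumes hn: "n \<ge> 1"
    and hT: "T > 0"
    and h\<phi>: "0 < \<bar>\<phi>\<bar>" "\<bar>\<phi>\<bar> < 1/2"
    and heq: "coth ((1/2 - \<phi>) * T) = \<kappa> - coth ((1/2 + \<phi>) * T)"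
    and h\<tau>: "\<tau> = real n * T"
    and h\<gamma>1: "\<gamma>\<^sub>1 = ((coth (\<tau> - (real n - 1/2 + \<phi>) * T))^2 - 1) /
                  ((\<kappa> - coth (\<tau> - (real n - 1/2 + \<phi>) * T))^2 - 1)"
    and h\<gamma>2: "\<gamma>\<^sub>2 = ((coth (\<tau> - (real n - 1/2 - \<phi>) * T))^2 - 1) /
                  ((\<kappa> - coth (\<tau> - (real n - 1/2 - \<phi>) * T))^2 - 1)"
    and h\<beta>: "\<beta> = \<gamma>\<^sub>1 + \<gamma>\<^sub>2"
  shows "\<gamma>\<^sub>1 * \<gamma>\<^sub>2 = 1 \<and> \<beta> > 2 \<and>
    (\<forall>x::real. x^(2*n - 1) * (x - \<gamma>\<^sub>1) * (x - \<gamma>\<^sub>2) - (1 - \<gamma>\<^sub>1) * (1 - \<gamma>\<^sub>2)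
       = (x - 1) * (x^(2*n) + (1 - \<beta>) * x^(2*n - 1) + (2 - \<beta>) * (\<Sum>i=0..2*n-2. x^i))) \<and>
    (\<exists>x::real. x > 1 \<and> x^(2*n - 1) * (x - \<gamma>\<^sub>1) * (x - \<gamma>\<^sub>2) - (1 - \<gamma>\<^sub>1) * (1 - \<gamma>\<^sub>2) = 0)"
proof -
  define a b where "a = (1/2 - \<phi>) * T" and "b = (1/2 + \<phi>) * T"
  have "a > 0" "b > 0" "a \<noteq> b"
    using hT h\<phi> by (auto simp: a_def b_def)
  have "\<tau> - (real n - 1/2 + \<phi>) * T = a" "\<tau> - (real n - 1/2 - \<phi>) * T = b"
    using h\<tau> by (simp_all add: a_def b_def algebra_simps)
  moreover have "\<kappa> = coth a + coth b"
    using heq by (simp add: a_def b_def)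
  ultimately have "\<gamma>\<^sub>1 = (coth a ^ 2 - 1) / (coth b ^ 2 - 1)" "\<gamma>\<^sub>2 = (coth b ^ 2 - 1) / (coth a ^ 2 - 1)"
    using h\<gamma>1 h\<gamma>2 by simp_all
  then have "\<gamma>\<^sub>1 = (sinh b / sinh a)\<^sup>2" "\<gamma>\<^sub>2 = 1 / (sinh b / sinh a)\<^sup>2"
    using \<open>a > 0\<close> \<open>b > 0\<close> by (simp_all add: coth_square_minus_one power_divide)
  moreover have "(sinh b / sinh a)\<^sup>2 \<noteq> 1"
    using \<open>a > 0\<close> \<open>b > 0\<close> \<open>a \<noteq> b\<close> by (auto simp: power2_eq_1_iff field_simps)
  ultimately have product: "\<gamma>\<^sub>1 * \<gamma>\<^sub>2 = 1" and sum: "\<beta> > 2"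
    using h\<beta> \<open>a > 0\<close> \<open>b > 0\<close> by (simp_all add: add_inverse_gt_two)
  have "{0..2*n-2} = {..<2*n-1}" "2*n = Suc (2*n-1)"
    using hn by auto
  then have factorization: "\<forall>x::real. x^(2*n - 1) * (x - \<gamma>\<^sub>1) * (x - \<gamma>\<^sub>2) - (1 - \<gamma>\<^sub>1) * (1 - \<gamma>\<^sub>2)
       = (x - 1) * (x^(2*n) + (1 - \<beta>) * x^(2*n - 1) + (2 - \<beta>) * (\<Sum>i=0..2*n-2. x^i))"
    using Dhat_eq_mult_Hhat[OF product, of "2*n-1"] h\<beta> by (simp only: Dhat_def Hhat_def) simp
  moreover have "\<exists>x::real. x > 1 \<and> x^(2*n - 1) * (x - \<gamma>\<^sub>1) * (x - \<gamma>\<^sub>2) - (1 - \<gamma>\<^sub>1) * (1 - \<gamma>\<^sub>2) = 0"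
    using Dhat_has_root_gt_one[OF product] sum h\<beta> by (simp add: Dhat_def)
  ultimately show ?thesis
    using product sum by blast
qed

end
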